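(* Let $\mathcal{H}=\mathbb{C}^d$ with orthonormal classical basis $\{|0\rangle,\dots,|d-1\rangle\}$, and let $U_{CD}$ be the unitary on $\mathbb{C}^d\otimes\mathbb{C}^d$ given by $U_{CD}|i,j\rangle=|i,\,j\oplus_d i\rangle$ (so $U_{CD}|i\rangle|0\rangle=|i\rangle|i\rangle$). For every density matrix $\rho$ on $\mathbb{C}^d$, the output $\rho'=U_{CD}(\rho\otimes|0\rangle\langle0|)U_{CD}^\dagger$ satisfies $S_N(\rho')=N_S(\rho)$. In particular $\rho'$ is entangled if and only if $\rho$ is nonclassical, and if $\hat M$ is a Hermitian operator on $\mathbb{C}^d$ with $\mathrm{Tr}(\hat M\rho)>\max_i\langle i|\hat M|i\rangle$, then $\rho'$ is entangled.
   Context: $\oplus_d$ denotes addition modulo $d$. The superposition number $r(\psi)$ of a pure state $|\psi\rangle=\sum_i c_i|i\rangle$ is the number of nonzero coefficients $c_i$; for a mixed state, $N_S(\rho)=\inf\{\sup_i r(\psi_i):\rho=\sum_ip_i|\psi_i\rangle\langle\psi_i|\}$, the infimum over all decompositions of $\rho$ into pure states with $p_i>0$. The Schmidt rank $r(\Psi)$ of a pure bipartite state is the number of nonzero coefficients in its Schmidt decomposition, and the Schmidt number of a bipartite mixed state is $S_N(\rho)=\inf\{\sup_i r(\Psi_i):\rho=\sum_ip_i|\Psi_i\rangle\langle\Psi_i|\}$. Classical single-system states are those with $N_S=1$ (convex combinations of the $|i\rangle\langle i|$); a bipartite state is entangled iff its Schmidt number exceeds 1. *)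

theory Defs
  imports Complex_Main "Jordan_Normal_Form.Matrix"
begin

text \<open>Conventions: C^d vectors are complex vec of dimension d (classical basis = standard
basis); C^d (x) C^d is C^(d*d) with |i,j> the basis vector of index i*d+j.\<close>

definition cinner :: "nat \<Rightarrow> complex vec \<Rightarrow> complex vec \<Rightarrow> complex" where
  "cinner n x y = (\<Sum>i<n. cnj (x $ i) * y $ i)"

definition adj :: "complex mat \<Rightarrow> complex mat" where
  "adj A = mat (dim_col A) (dim_row A) (\<lambda>(i,j). cnj (A $$ (j,i)))"

definition hermitian :: "nat \<Rightarrow> complex mat \<Rightarrow> bool" where
  "hermitian n A \<longleftrightarrow> A \<in> carrier_mat n n \<and> adj A = A"

definition mtrace :: "complex mat \<Rightarrow> complex" where
  "mtrace A = (\<Sum>i<dim_row A. A $$ (i,i))"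

definition density :: "nat \<Rightarrow> complex mat \<Rightarrow> bool" where
  "density n \<rho> \<longleftrightarrow> hermitian n \<rho>
     \<and> (\<forall>v \<in> carrier_vec n. 0 \<le> Re (cinner n v (\<rho> *\<^sub>v v)))
     \<and> mtrace \<rho> = 1"

definition pure_decomp :: "nat \<Rightarrow> complex mat \<Rightarrow> nat \<Rightarrow> (nat \<Rightarrow> real) \<Rightarrow> (nat \<Rightarrow> complex vec) \<Rightarrow> bool" where
  "pure_decomp n \<rho> m p \<psi> \<longleftrightarrow> 0 < m
     \<and> (\<forall>k<m. 0 < p k \<and> \<psi> k \<in> carrier_vec n \<and> cinner n (\<psi> k) (\<psi> k) = 1)
     \<and> \<rho> = mat n n (\<lambda>(i,j). \<Sum>k<m. complex_of_real (p k) * (\<psi> k $ i) * cnj (\<psi> k $ j))"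

definition superpos :: "nat \<Rightarrow> complex vec \<Rightarrow> nat" where
  "superpos d \<psi> = card {i. i < d \<and> \<psi> $ i \<noteq> 0}"

definition N_S :: "nat \<Rightarrow> complex mat \<Rightarrow> nat" where
  "N_S d \<rho> = Inf {Max ((\<lambda>k. superpos d (\<psi> k)) ` {..<m}) | m p \<psi>. pure_decomp d \<rho> m p \<psi>}"

definition tensor_vec :: "nat \<Rightarrow> complex vec \<Rightarrow> complex vec \<Rightarrow> complex vec" where
  "tensor_vec d u v = vec (d*d) (\<lambda>k. u $ (k div d) * v $ (k mod d))"

definition schmidt_rank :: "nat \<Rightarrow> complex vec \<Rightarrow> nat" where
  "schmidt_rank d \<Psi> = (LEAST r. \<exists>s u v.
      (\<forall>k<r. 0 < s k \<and> u k \<in> carrier_vec d \<and> v k \<in> carrier_vec d)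
      \<and> (\<forall>k<r. \<forall>l<r. cinner d (u k) (u l) = (if k = l then 1 else 0)
                    \<and> cinner d (v k) (v l) = (if k = l then 1 else 0))
      \<and> \<Psi> = vec (d*d) (\<lambda>i. \<Sum>k<r. complex_of_real (s k) * tensor_vec d (u k) (v k) $ i))"

definition S_N :: "nat \<Rightarrow> complex mat \<Rightarrow> nat" where
  "S_N d \<rho> = Inf {Max ((\<lambda>k. schmidt_rank d (\<psi> k)) ` {..<m}) | m p \<psi>. pure_decomp (d*d) \<rho> m p \<psi>}"

definition kron :: "nat \<Rightarrow> complex mat \<Rightarrow> complex mat \<Rightarrow> complex mat" where
  "kron d A B = mat (d*d) (d*d) (\<lambda>(r,c). A $$ (r div d, c div d) * B $$ (r mod d, c mod d))"

definition proj0 :: "nat \<Rightarrow> complex mat" where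
  "proj0 d = mat d d (\<lambda>(i,j). if i = 0 \<and> j = 0 then 1 else 0)"

text \<open>U_CD |i,j> = |i, j +_d i>.\<close>
definition U_CD :: "nat \<Rightarrow> complex mat" where
  "U_CD d = mat (d*d) (d*d) (\<lambda>(r,c). if r = (c div d) * d + ((c mod d + c div d) mod d) then 1 else 0)"

definition cd_output :: "nat \<Rightarrow> complex mat \<Rightarrow> complex mat" where
  "cd_output d \<rho> = U_CD d * kron d \<rho> (proj0 d) * adj (U_CD d)"

end

theory Submission
  imports Defs
begin

text \<open>
  The control-copy gate U_CD maps \<rho> (x) |0><0| to \<rho>' = \<Sum>_{a,c} \<rho>_{a,c} |a,a><c,c|.
  Pure-state decompositions of \<rho>' are exactly the copies \<Sum>_i \<psi>_i |i,i> of pure-state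
  decompositions \<psi> of \<rho> (with the same weights), and the Schmidt rank of such a copy
  equals the superposition number of \<psi>.  Hence the two sets of values whose infima
  define S_N(\<rho>') and N_S(\<rho>) coincide, which gives S_N(\<rho>') = N_S(\<rho>).
\<close>

definition qform :: "nat \<Rightarrow> (nat \<Rightarrow> nat \<Rightarrow> complex) \<Rightarrow> (nat \<Rightarrow> complex) \<Rightarrow> complex" where
  "qform d f v = (\<Sum>i<d. cnj (v i) * (\<Sum>j<d. f i j * v j))"

definition psd_kernel :: "nat \<Rightarrow> (nat \<Rightarrow> nat \<Rightarrow> complex) \<Rightarrow> bool" where
  "psd_kernel d f \<longleftrightarrow> (\<forall>i<d. \<forall>j<d. f i j = cnj (f j i)) \<and> (\<forall>v. 0 \<le> Re (qform d f v))"

lemma psd_kernelD: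
  assumes "psd_kernel d f"
  shows "\<And>i j. i < d \<Longrightarrow> j < d \<Longrightarrow> f i j = cnj (f j i)" "\<And>v. 0 \<le> Re (qform d f v)"
  using assms unfolding psd_kernel_def by blast+

lemma qform_shift:
  assumes a: "a < d" and herm: "\<And>i j. i < d \<Longrightarrow> j < d \<Longrightarrow> f i j = cnj (f j i)"
  shows "qform d f (\<lambda>i. v i + (if i = a then t else 0))
    = qform d f v + (t * cnj (\<Sum>j<d. f a j * v j) + cnj t * (\<Sum>j<d. f a j * v j) + cnj t * t * f a a)"
proof -
  have row: "(\<Sum>j<d. f i j * (v j + (if j = a then t else 0))) = (\<Sum>j<d. f i j * v j) + f i a * t" for i
  proof -
    have "(\<Sum>j<d. f i j * (v j + (if j = a then t else 0)))
        = (\<Sum>j<d. f i j * v j + (if j = a then f i j * t else 0))"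
      by (rule sum.cong) (auto simp: distrib_left)
    thus ?thesis using a by (simp add: sum.distrib)
  qed
  have col: "(\<Sum>i<d. cnj (v i) * f i a) = cnj (\<Sum>j<d. f a j * v j)"
    unfolding cnj_sum
  proof (rule sum.cong)
    fix j assume "j \<in> {..<d}"
    hence "f a j = cnj (f j a)" using herm a by blast
    thus "cnj (v j) * f j a = cnj (f a j * v j)" by simp
  qed simp
  have "qform d f (\<lambda>i. v i + (if i = a then t else 0))
     = (\<Sum>i<d. cnj (v i) * ((\<Sum>j<d. f i j * v j) + f i a * t)
          + (if i = a then cnj t * ((\<Sum>j<d. f i j * v j) + f i a * t) else 0))"
    unfolding qform_def row by (intro sum.cong) (auto simp: distrib_right)
  also have "\<dots> = (\<Sum>i<d. cnj (v i) * (\<Sum>j<d. f i j * v j)) + t * (\<Sum>i<d. cnj (v i) * f i a)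
     + cnj t * ((\<Sum>j<d. f a j * v j) + f a a * t)"
    using a by (simp add: sum.distrib sum_distrib_left distrib_left mult.assoc
        mult.left_commute mult.commute)
  finally show ?thesis unfolding col qform_def by (simp only: algebra_simps)
qed

lemma qform_unit:
  assumes "b < d" "\<And>i j. i < d \<Longrightarrow> j < d \<Longrightarrow> f i j = cnj (f j i)"
  shows "qform d f (\<lambda>i. if i = b then 1 else 0) = f b b"
  using qform_shift[OF assms, where v = "\<lambda>_. 0" and t = 1] by (simp add: qform_def)

lemma psd_diag:
  assumes psd: "psd_kernel d f" and a: "a < d"
  shows "f a a = of_real (Re (f a a))" "0 \<le> Re (f a a)"
proof -
  have "f a a = cnj (f a a)" by (rule psd_kernelD(1)[OF psd a a])
  thus "f a a = of_real (Re (f a a))" by (metis Reals_cnj_iff complex_is_Real_iff of_real_Re)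
  have "0 \<le> Re (qform d f (\<lambda>i. if i = a then 1 else 0))" by (rule psd_kernelD(2)[OF psd])
  thus "0 \<le> Re (f a a)" by (simp only: qform_unit[OF a psd_kernelD(1)[OF psd]])
qed

lemma psd_diag_pos:
  assumes psd: "psd_kernel d f" and a: "a < d" and nz: "f a a \<noteq> 0"
  shows "0 < Re (f a a)"
proof -
  have "Re (f a a) \<noteq> 0"
  proof
    assume "Re (f a a) = 0"
    hence "f a a = 0" using psd_diag(1)[OF psd a] by simp
    thus False using nz by simp
  qed
  thus ?thesis using psd_diag(2)[OF psd a] by linarith
qed

text \<open>An elementary fact about real quadratics: if q - 2 r B + r^2 B s \<ge> 0 for all r
  (with B, s \<ge> 0) then B \<le> s q.  This is the discriminant step of Cauchy--Schwarz.\<close>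
lemma quadratic_nonneg_bound:
  fixes q B s :: real
  assumes nonneg: "\<And>r. 0 \<le> q - 2*r*B + r^2*B*s" and "0 \<le> B" "0 \<le> s"
  shows "B \<le> s * q"
proof (cases "s > 0")
  case True
  have "0 \<le> q - 2*(1/s)*B + (1/s)^2*B*s" by (rule nonneg)
  also have "\<dots> = q - B/s" using True by (simp add: power2_eq_square field_simps)
  finally show ?thesis using True by (simp add: field_simps mult.commute)
next
  case False
  hence s0: "s = 0" using assms by simp
  show ?thesis
  proof (rule ccontr)
    assume "\<not> ?thesis"
    hence B: "B > 0" using s0 by simp
    have "0 \<le> q - 2*((q+1)/(2*B))*B + ((q+1)/(2*B))^2*B*s" by (rule nonneg)
    also have "\<dots> = -1" using B s0 by (simp add: field_simps)
    finally show False by simp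
  qed
qed

lemma psd_row_bound:
  assumes psd: "psd_kernel d f" and a: "a < d"
  shows "(cmod (\<Sum>j<d. f a j * v j))^2 \<le> Re (f a a) * Re (qform d f v)"
proof -
  define b where "b = (\<Sum>j<d. f a j * v j)"
  define B where "B = (cmod b)^2"
  define s where "s = Re (f a a)"
  have faa: "f a a = of_real s" using psd_diag[OF psd a] s_def by simp
  have bb: "b * cnj b = of_real B" unfolding B_def by (metis complex_norm_square)
  have "0 \<le> Re (qform d f v) - 2*r*B + r^2*B*s" for r
  proof -
    define t where "t = - (of_real r * b)"
    have shift: "qform d f (\<lambda>i. v i + (if i = a then t else 0))
        = qform d f v + (t * cnj b + cnj t * b + cnj t * t * f a a)"
      unfolding b_def by (rule qform_shift[OF a psd_kernelD(1)[OF psd]])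
    have "t * cnj b + cnj t * b + cnj t * t * f a a = of_real (- 2*r*B + r^2*B*s)"
      unfolding t_def faa by (simp add: algebra_simps power2_eq_square bb[symmetric])
    thus ?thesis using psd_kernelD(2)[OF psd, of "\<lambda>i. v i + (if i = a then t else 0)"]
      unfolding shift by simp
  qed
  moreover have "0 \<le> s" using psd_diag[OF psd a] s_def by simp
  ultimately show ?thesis using quadratic_nonneg_bound[of "Re (qform d f v)" B s]
    unfolding B_def b_def s_def by simp
qed

lemma psd_zero_diag:
  assumes psd: "psd_kernel d f" and a: "a < d" and b: "b < d" and z: "Re (f b b) = 0"
  shows "f a b = 0" "f b a = 0"
proof -
  have "(\<Sum>j<d. f a j * (if j = b then 1 else 0)) = f a b"
    using b by (simp add: if_distrib cong: if_cong)
  hence "(cmod (f a b))^2 \<le> Re (f a a) * Re (f b b)"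
    using psd_row_bound[OF psd a, of "\<lambda>j. if j = b then 1 else 0"]
      qform_unit[OF b psd_kernelD(1)[OF psd]] by simp
  thus "f a b = 0" using z by simp
  thus "f b a = 0" using psd_kernelD(1)[OF psd b a] by simp
qed

text \<open>One step of a Cholesky-type factorization: subtracting the rank-one kernel
  w w* built from the a-th column (scaled by the square root of the a-th diagonal
  entry) keeps the kernel positive semidefinite, kills the a-th diagonal entry and keeps
  vanishing diagonal entries vanishing.\<close>
lemma psd_peel:
  assumes psd: "psd_kernel d f" and a: "a < d" and pos: "0 < Re (f a a)"
    and w_def: "w = (\<lambda>i. f i a / of_real (sqrt (Re (f a a))))"
    and g_def: "g = (\<lambda>i j. f i j - w i * cnj (w j))"
  shows "psd_kernel d g" "g a a = 0" "\<And>b. b < d \<Longrightarrow> f b b = 0 \<Longrightarrow> g b b = 0" "w a \<noteq> 0"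
proof -
  define s where "s = Re (f a a)"
  have s: "s > 0" using pos s_def by simp
  have faa: "f a a = of_real s" using psd_diag[OF psd a] s_def by simp
  have sq: "of_real (sqrt s) * of_real (sqrt s) = (of_real s :: complex)"
    using s by (subst of_real_mult[symmetric]) simp
  have cw: "cnj (w j) = f a j / of_real (sqrt s)" if "j < d" for j
    unfolding w_def s_def using psd_kernelD(1)[OF psd a that] by simp
  have herm: "g i j = cnj (g j i)" if "i < d" "j < d" for i j
    unfolding g_def using psd_kernelD(1)[OF psd that] by simp
  have "0 \<le> Re (qform d g v)" for v
  proof -
    define b where "b = (\<Sum>j<d. f a j * v j)"
    define c where "c = (\<Sum>j<d. cnj (w j) * v j)"
    have c_b: "c = b / of_real (sqrt s)"
      unfolding c_def b_def sum_divide_distrib by (rule sum.cong) (auto simp: cw)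
    have cnj_c: "cnj c = (\<Sum>i<d. cnj (v i) * w i)" unfolding c_def cnj_sum by (simp add: mult.commute)
    have "qform d g v = (\<Sum>i<d. cnj (v i) * (\<Sum>j<d. f i j * v j) - cnj (v i) * w i * c)"
      unfolding qform_def g_def c_def
      by (rule sum.cong) (simp_all add: left_diff_distrib right_diff_distrib sum_subtractf sum_distrib_left mult.assoc)
    also have "\<dots> = qform d f v - cnj c * c"
      unfolding qform_def cnj_c sum_subtractf sum_distrib_right ..
    finally have "Re (qform d g v) = Re (qform d f v) - (cmod b)^2 / s"
      unfolding c_b using s
      by (simp add: complex_norm_square[symmetric] power_divide) (metis cmod_power2 power2_eq_square)
    moreover have "(cmod b)^2 \<le> s * Re (qform d f v)"
      using psd_row_bound[OF psd a, of v] unfolding b_def s_def .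
    ultimately show ?thesis using s by (simp add: divide_le_eq mult.commute)
  qed
  thus "psd_kernel d g" unfolding psd_kernel_def using herm by blast
  show "g a a = 0" unfolding g_def using cw[OF a] faa s unfolding w_def s_def[symmetric]
    by (simp add: field_simps sq)
  show "g b b = 0" if "b < d" "f b b = 0" for b
  proof -
    have "f b a = 0" using psd_zero_diag(2)[OF psd a that(1)] that by simp
    thus ?thesis unfolding g_def w_def using that by simp
  qed
  have "f a a \<noteq> 0" using faa s by auto
  thus "w a \<noteq> 0" unfolding w_def using pos by simp
qed

text \<open>Every positive semidefinite kernel is a finite sum of rank-one kernels
  w_k w_k* with nonzero w_k.  Induction on the number of nonzero diagonal entries,
  each step removing one of them by psd_peel.\<close>
lemma psd_rank_one_sum:
  assumes "psd_kernel d f"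
  shows "\<exists>(m::nat) w. (\<forall>k<m. \<exists>i<d. w k i \<noteq> 0)
           \<and> (\<forall>i<d. \<forall>j<d. f i j = (\<Sum>k<m. w k i * cnj (w k j)))"
  using assms
proof (induction "card {i. i < d \<and> f i i \<noteq> 0}" arbitrary: f rule: less_induct)
  case (less f)
  note psd = less.prems
  show ?case
  proof (cases "\<exists>a<d. f a a \<noteq> 0")
    case False
    have "f i j = 0" if "i < d" "j < d" for i j
      using psd_zero_diag(1)[OF psd that] False that by simp
    thus ?thesis by (intro exI[of _ "0::nat"] exI[of _ "\<lambda>_ _. 0"]) simp
  next
    case True
    then obtain a where a: "a < d" "f a a \<noteq> 0" by blast
    note pos = psd_diag_pos[OF psd a]
    define w where "w = (\<lambda>i. f i a / of_real (sqrt (Re (f a a))))"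
    define g where "g = (\<lambda>i j. f i j - w i * cnj (w j))"
    note peel = psd_peel[OF psd a(1) pos w_def g_def]
    have "{i. i < d \<and> g i i \<noteq> 0} \<subset> {i. i < d \<and> f i i \<noteq> 0}"
    proof
      show "{i. i < d \<and> g i i \<noteq> 0} \<subseteq> {i. i < d \<and> f i i \<noteq> 0}" using peel(3) by blast
      show "{i. i < d \<and> g i i \<noteq> 0} \<noteq> {i. i < d \<and> f i i \<noteq> 0}" using peel(2) a by blast
    qed
    hence "card {i. i < d \<and> g i i \<noteq> 0} < card {i. i < d \<and> f i i \<noteq> 0}"
      by (rule psubset_card_mono[rotated]) simp
    from less.hyps[OF this peel(1)] obtain m :: nat and u where
      u: "\<forall>k<m. \<exists>i<d. u k i \<noteq> 0" "\<forall>i<d. \<forall>j<d. g i j = (\<Sum>k<m. u k i * cnj (u k j))"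
      by blast
    define u' where "u' = (\<lambda>k. if k < m then u k else w)"
    have "\<exists>i<d. u' k i \<noteq> 0" if "k < Suc m" for k
    proof (cases "k < m")
      case True thus ?thesis using u(1) unfolding u'_def by simp
    next
      case False thus ?thesis using peel(4) a(1) unfolding u'_def by auto
    qed
    moreover have "f i j = (\<Sum>k<Suc m. u' k i * cnj (u' k j))" if ij: "i < d" "j < d" for i j
    proof -
      have "(\<Sum>k<Suc m. u' k i * cnj (u' k j)) = g i j + w i * cnj (w j)"
        using u(2) ij unfolding u'_def by simp
      thus ?thesis unfolding g_def by simp
    qed
    ultimately show ?thesis by blast
  qed
qed

lemma density_carrier: "density d \<rho> \<Longrightarrow> \<rho> \<in> carrier_mat d d"
  unfolding density_def hermitian_def by blast

lemma density_dim_pos: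
  assumes "density d \<rho>" shows "0 < d"
proof (rule ccontr)
  assume "\<not> 0 < d"
  hence "mtrace \<rho> = 0" using density_carrier[OF assms] unfolding mtrace_def by simp
  thus False using assms unfolding density_def by simp
qed

lemma density_psd_kernel:
  assumes den: "density d \<rho>"
  shows "psd_kernel d (\<lambda>i j. \<rho> $$ (i,j))"
proof -
  have C: "\<rho> \<in> carrier_mat d d" by (rule density_carrier[OF den])
  have "adj \<rho> = \<rho>" using den unfolding density_def hermitian_def by blast
  hence herm: "\<rho> $$ (i,j) = cnj (\<rho> $$ (j,i))" if "i < d" "j < d" for i j
    using that C unfolding adj_def by (metis carrier_matD index_mat(1) old.prod.case)
  have qform_eq: "qform d (\<lambda>i j. \<rho> $$ (i,j)) v = cinner d (vec d v) (\<rho> *\<^sub>v vec d v)" for v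
    unfolding qform_def cinner_def using C
    by (intro sum.cong) (auto simp: scalar_prod_def atLeast0LessThan intro!: sum.cong)
  have "0 \<le> Re (cinner d (vec d v) (\<rho> *\<^sub>v vec d v))" for v
    using den unfolding density_def by simp
  thus ?thesis unfolding psd_kernel_def qform_eq using herm by blast
qed

lemma normalize_nonzero_vec:
  assumes "\<exists>i<d. w i \<noteq> 0"
  defines "p \<equiv> \<Sum>i<d. (cmod (w i))^2"
  defines "\<psi> \<equiv> vec d (\<lambda>i. w i / of_real (sqrt p))"
  shows "0 < p" "cinner d \<psi> \<psi> = 1"
    "\<And>i j. i < d \<Longrightarrow> j < d \<Longrightarrow> w i * cnj (w j) = of_real p * (\<psi> $ i) * cnj (\<psi> $ j)"
proof -
  obtain i where i: "i < d" "w i \<noteq> 0" using assms(1) by blast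
  have "(cmod (w i))^2 \<le> p" unfolding p_def
    by (rule member_le_sum[of i "{..<d}" "\<lambda>i. (cmod (w i))^2"]) (use i in auto)
  moreover have "0 < (cmod (w i))^2" using i by simp
  ultimately show p_pos: "0 < p" by linarith
  have sq: "of_real (sqrt p) * of_real (sqrt p) = (of_real p :: complex)"
    using p_pos by (subst of_real_mult[symmetric]) simp
  have "(\<Sum>i<d. cnj (w i) * w i) = of_real p"
    unfolding p_def of_real_sum by (rule sum.cong) (simp_all only: complex_norm_square mult.commute)
  moreover have "cinner d \<psi> \<psi> = (\<Sum>i<d. cnj (w i) * w i) / of_real p"
    unfolding cinner_def \<psi>_def sum_divide_distrib by (rule sum.cong) (auto simp: sq[symmetric])
  ultimately show "cinner d \<psi> \<psi> = 1" using p_pos by simp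
  show "w i * cnj (w j) = of_real p * (\<psi> $ i) * cnj (\<psi> $ j)" if "i < d" "j < d" for i j
    using p_pos sq that unfolding \<psi>_def by (simp add: field_simps)
qed

text \<open>Every density matrix admits a decomposition into normalized pure states, obtained by
  normalizing the rank-one summands of psd_rank_one_sum; in particular the infima defining
  N_S and S_N range over nonempty sets.\<close>
lemma density_has_pure_decomp:
  assumes den: "density d \<rho>"
  shows "\<exists>m p \<psi>. pure_decomp d \<rho> m p \<psi>"
proof -
  have C: "\<rho> \<in> carrier_mat d d" by (rule density_carrier[OF den])
  obtain m :: nat and w where w: "\<forall>k<m. \<exists>i<d. w k i \<noteq> 0"
    "\<forall>i<d. \<forall>j<d. \<rho> $$ (i,j) = (\<Sum>k<m. w k i * cnj (w k j))"
    using psd_rank_one_sum[OF density_psd_kernel[OF den]] by blast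
  have m: "0 < m"
  proof (rule ccontr)
    assume "\<not> 0 < m"
    hence "mtrace \<rho> = 0" unfolding mtrace_def using C w(2) by simp
    thus False using den unfolding density_def by simp
  qed
  define p where "p = (\<lambda>k. \<Sum>i<d. (cmod (w k i))^2)"
  define \<psi> where "\<psi> = (\<lambda>k. vec d (\<lambda>i. w k i / of_real (sqrt (p k))))"
  have p_pos: "0 < p k" and \<psi>_norm: "cinner d (\<psi> k) (\<psi> k) = 1"
    and w_\<psi>: "\<And>i j. i < d \<Longrightarrow> j < d \<Longrightarrow> w k i * cnj (w k j) = of_real (p k) * (\<psi> k $ i) * cnj (\<psi> k $ j)"
    if "k < m" for k
    using normalize_nonzero_vec[OF w(1)[rule_format, OF that]] unfolding p_def \<psi>_def by blast+
  have "\<rho> = mat d d (\<lambda>(i,j). \<Sum>k<m. of_real (p k) * (\<psi> k $ i) * cnj (\<psi> k $ j))"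
  proof (rule eq_matI)
    fix i j assume "i < dim_row (mat d d (\<lambda>(i,j). \<Sum>k<m. of_real (p k) * (\<psi> k $ i) * cnj (\<psi> k $ j)))"
      "j < dim_col (mat d d (\<lambda>(i,j). \<Sum>k<m. of_real (p k) * (\<psi> k $ i) * cnj (\<psi> k $ j)))"
    hence ij: "i < d" "j < d" by auto
    have "\<rho> $$ (i,j) = (\<Sum>k<m. w k i * cnj (w k j))" using w(2) ij by simp
    also have "\<dots> = (\<Sum>k<m. of_real (p k) * (\<psi> k $ i) * cnj (\<psi> k $ j))"
      using w_\<psi> ij by (intro sum.cong) auto
    finally show "\<rho> $$ (i,j) = mat d d (\<lambda>(i,j). \<Sum>k<m. of_real (p k) * (\<psi> k $ i) * cnj (\<psi> k $ j)) $$ (i,j)"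
      using ij by simp
  qed (use C in auto)
  hence "pure_decomp d \<rho> m p \<psi>"
    unfolding pure_decomp_def using m p_pos \<psi>_norm by (auto simp: \<psi>_def)
  thus ?thesis by blast
qed

lemma sum_pairs: "(\<Sum>x<n*d. f x) = (\<Sum>a<n. \<Sum>b<(d::nat). f (a*d+b))"
proof -
  have "(\<Sum>x<n*d. f x) = (\<Sum>a<n. \<Sum>x\<in>{a*d..<a*d+d}. f x)" by (rule sum.nat_group[symmetric])
  also have "\<dots> = (\<Sum>a<n. \<Sum>b<d. f (a*d+b))"
  proof (rule sum.cong[OF refl])
    fix a
    have "(\<Sum>x\<in>{0+a*d..<d+a*d}. f x) = (\<Sum>b\<in>{0..<d}. f (b+a*d))" by (rule sum.shift_bounds_nat_ivl)
    thus "(\<Sum>x\<in>{a*d..<a*d+d}. f x) = (\<Sum>b<d. f (a*d+b))" by (simp add: atLeast0LessThan add.commute)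
  qed
  finally show ?thesis .
qed

lemma pair_index_lt: "a < (d::nat) \<Longrightarrow> b < d \<Longrightarrow> a*d+b < d*d"
proof -
  assume "a < d" "b < d"
  hence "a*d + b < (a+1)*d" by simp
  also have "\<dots> \<le> d*d" using \<open>a < d\<close> by (intro mult_right_mono) auto
  finally show ?thesis .
qed

lemma pair_index_div: "b < (d::nat) \<Longrightarrow> (a*d+b) div d = a"
  and pair_index_mod: "b < (d::nat) \<Longrightarrow> (a*d+b) mod d = b"
  by auto

lemma pair_index_fst_lt: "x < d*d \<Longrightarrow> x div d < (d::nat)"
  by (simp add: less_mult_imp_div_less)

lemma sum_diagonal_pairs:
  assumes "x < d*(d::nat)"
  shows "(\<Sum>a<d. if x = a*d+a then X a else (0::complex)) = (if x div d = x mod d then X (x div d) else 0)"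
proof -
  have diag: "x = a*d+a \<longleftrightarrow> a = x div d \<and> x div d = x mod d" if "a < d" for a
    using that pair_index_div[of a d a] pair_index_mod[of a d a] by (metis div_mult_mod_eq)
  have "(\<Sum>a<d. if x = a*d+a then X a else 0)
     = (\<Sum>a<d. if a = x div d then (if x div d = x mod d then X (x div d) else 0) else 0)"
    by (rule sum.cong) (auto simp: diag)
  also have "\<dots> = (if x div d = x mod d then X (x div d) else 0)"
    using pair_index_fst_lt[OF assms] by simp
  finally show ?thesis .
qed

lemma mat_mult_entry:
  assumes "A \<in> carrier_mat n k" "B \<in> carrier_mat k l" "i < n" "j < l"
  shows "(A * B) $$ (i,j) = (\<Sum>x<k. A $$ (i,x) * B $$ (x,j))"
  using assms by (auto simp: scalar_prod_def atLeast0LessThan intro!: sum.cong)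

lemma U_CD_carrier: "U_CD d \<in> carrier_mat (d*d) (d*d)"
  unfolding U_CD_def by simp

lemma adj_U_CD_carrier: "adj (U_CD d) \<in> carrier_mat (d*d) (d*d)"
  unfolding U_CD_def adj_def by simp

lemma kron_carrier: "kron d A B \<in> carrier_mat (d*d) (d*d)"
  unfolding kron_def by simp

lemma cd_output_carrier: "cd_output d \<rho> \<in> carrier_mat (d*d) (d*d)"
  unfolding cd_output_def using U_CD_carrier kron_carrier adj_U_CD_carrier by (metis mult_carrier_mat)

lemma U_CD_column: "a < d \<Longrightarrow> b < d \<Longrightarrow> r < d*d \<Longrightarrow>
  U_CD d $$ (r, a*d+b) = (if r = a*d + (b+a) mod d then 1 else 0)"
  unfolding U_CD_def using pair_index_lt[of a d b] pair_index_div[of b d a] pair_index_mod[of b d a]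
  by simp

lemma adj_U_CD_row: "a < d \<Longrightarrow> b < d \<Longrightarrow> c < d*d \<Longrightarrow>
  adj (U_CD d) $$ (a*d+b, c) = (if c = a*d + (b+a) mod d then 1 else 0)"
  unfolding adj_def U_CD_def using pair_index_lt[of a d b] pair_index_div[of b d a] pair_index_mod[of b d a]
  by simp

lemma kron_proj0_row: "a < d \<Longrightarrow> b < d \<Longrightarrow> t < d*d \<Longrightarrow>
  kron d \<rho> (proj0 d) $$ (a*d+b, t) = (if b = 0 \<and> t mod d = 0 then \<rho> $$ (a, t div d) else 0)"
  unfolding kron_def proj0_def using pair_index_lt[of a d b] pair_index_div[of b d a] pair_index_mod[of b d a]
  by simp

lemma U_CD_kron_entry:
  assumes d: "0 < d" and r: "r < d*d" and t: "t < d*d"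
  shows "(U_CD d * kron d \<rho> (proj0 d)) $$ (r,t) =
    (if r div d = r mod d \<and> t mod d = 0 then \<rho> $$ (r div d, t div d) else 0)"
proof -
  have "(U_CD d * kron d \<rho> (proj0 d)) $$ (r,t)
      = (\<Sum>a<d. \<Sum>b<d. U_CD d $$ (r,a*d+b) * kron d \<rho> (proj0 d) $$ (a*d+b,t))"
    unfolding mat_mult_entry[OF U_CD_carrier kron_carrier r t] by (rule sum_pairs)
  also have "\<dots> = (\<Sum>a<d. \<Sum>b<d. if b = 0 then (if r = a*d+a then (if t mod d = 0 then \<rho> $$ (a, t div d) else 0) else 0) else 0)"
    by (intro sum.cong refl) (auto simp: U_CD_column kron_proj0_row r t)
  also have "\<dots> = (\<Sum>a<d. if r = a*d+a then (if t mod d = 0 then \<rho> $$ (a, t div d) else 0) else 0)"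
    using d by simp
  also have "\<dots> = (if r div d = r mod d \<and> t mod d = 0 then \<rho> $$ (r div d, t div d) else 0)"
    unfolding sum_diagonal_pairs[OF r] by simp
  finally show ?thesis .
qed

lemma cd_output_entry:
  assumes d: "0 < d" and r: "r < d*d" and c: "c < d*d"
  shows "cd_output d \<rho> $$ (r,c) =
    (if r div d = r mod d \<and> c div d = c mod d then \<rho> $$ (r div d, c div d) else 0)"
proof -
  have "cd_output d \<rho> $$ (r,c)
      = (\<Sum>a<d. \<Sum>b<d. (U_CD d * kron d \<rho> (proj0 d)) $$ (r,a*d+b) * adj (U_CD d) $$ (a*d+b,c))"
    unfolding cd_output_def
      mat_mult_entry[OF mult_carrier_mat[OF U_CD_carrier kron_carrier] adj_U_CD_carrier r c]
    by (rule sum_pairs)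
  also have "\<dots> = (\<Sum>a<d. \<Sum>b<d. if b = 0 then (if c = a*d+a then (if r div d = r mod d then \<rho> $$ (r div d, a) else 0) else 0) else 0)"
    by (intro sum.cong refl)
       (auto simp: U_CD_kron_entry adj_U_CD_row d r c pair_index_lt pair_index_div pair_index_mod)
  also have "\<dots> = (\<Sum>a<d. if c = a*d+a then (if r div d = r mod d then \<rho> $$ (r div d, a) else 0) else 0)"
    using d by simp
  also have "\<dots> = (if r div d = r mod d \<and> c div d = c mod d then \<rho> $$ (r div d, c div d) else 0)"
    unfolding sum_diagonal_pairs[OF c] by simp
  finally show ?thesis .
qed

text \<open>The copy of a vector \<psi> of C^d into C^d (x) C^d: \<Sum>_i \<psi>_i |i,i>.  This is
  what U_CD does to \<psi> (x) |0>.\<close>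
definition copy_vec :: "nat \<Rightarrow> complex vec \<Rightarrow> complex vec" where
  "copy_vec d \<psi> = vec (d*d) (\<lambda>x. if x div d = x mod d then \<psi> $ (x div d) else 0)"

lemma copy_vec_carrier: "copy_vec d \<psi> \<in> carrier_vec (d*d)"
  unfolding copy_vec_def by simp

lemma copy_vec_entry: "x < d*d \<Longrightarrow> copy_vec d \<psi> $ x = (if x div d = x mod d then \<psi> $ (x div d) else 0)"
  unfolding copy_vec_def by simp

lemma copy_vec_pair: "a < d \<Longrightarrow> b < d \<Longrightarrow> copy_vec d \<psi> $ (a*d+b) = (if a = b then \<psi> $ a else 0)"
  using copy_vec_entry[OF pair_index_lt[of a d b]] pair_index_div[of b d a] pair_index_mod[of b d a]
  by simp

lemma cinner_copy_vec: "cinner (d*d) (copy_vec d \<psi>) (copy_vec d \<phi>) = cinner d \<psi> \<phi>"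
proof -
  have "cinner (d*d) (copy_vec d \<psi>) (copy_vec d \<phi>)
     = (\<Sum>a<d. \<Sum>b<d. cnj (copy_vec d \<psi> $ (a*d+b)) * copy_vec d \<phi> $ (a*d+b))"
    unfolding cinner_def by (rule sum_pairs)
  also have "\<dots> = (\<Sum>a<d. \<Sum>b<d. if b = a then cnj (\<psi> $ a) * \<phi> $ a else 0)"
    by (intro sum.cong refl) (auto simp: copy_vec_pair)
  also have "\<dots> = cinner d \<psi> \<phi>" unfolding cinner_def by simp
  finally show ?thesis .
qed

lemma pure_decomp_copy:
  assumes d: "0 < d" and PD: "pure_decomp d \<rho> m p \<psi>"
  shows "pure_decomp (d*d) (cd_output d \<rho>) m p (\<lambda>k. copy_vec d (\<psi> k))"
proof -
  have m: "0 < m" and A: "\<forall>k<m. 0 < p k \<and> \<psi> k \<in> carrier_vec d \<and> cinner d (\<psi> k) (\<psi> k) = 1"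
    and R: "\<rho> = mat d d (\<lambda>(i,j). \<Sum>k<m. of_real (p k) * (\<psi> k $ i) * cnj (\<psi> k $ j))"
    using PD unfolding pure_decomp_def by auto
  have "cd_output d \<rho> $$ (r,c) = (\<Sum>k<m. of_real (p k) * (copy_vec d (\<psi> k) $ r) * cnj (copy_vec d (\<psi> k) $ c))"
    if rc: "r < d*d" "c < d*d" for r c
    unfolding cd_output_entry[OF d rc] copy_vec_entry[OF rc(1)] copy_vec_entry[OF rc(2)]
    by (subst R) (auto simp: pair_index_fst_lt[OF rc(1)] pair_index_fst_lt[OF rc(2)] d)
  hence "cd_output d \<rho>
      = mat (d*d) (d*d) (\<lambda>(i,j). \<Sum>k<m. of_real (p k) * (copy_vec d (\<psi> k) $ i) * cnj (copy_vec d (\<psi> k) $ j))"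
    using cd_output_carrier[of d \<rho>] by (intro eq_matI) auto
  thus ?thesis unfolding pure_decomp_def using m A by (simp add: copy_vec_carrier cinner_copy_vec)
qed

text \<open>In any pure-state decomposition, every pure state vanishes on the basis vectors
  where the mixture has a vanishing diagonal entry (a sum of nonnegative terms is zero).\<close>
lemma pure_decomp_support:
  assumes PD: "pure_decomp n \<sigma> m p \<Psi>" and x: "x < n" and zero: "\<sigma> $$ (x,x) = 0" and k: "k < m"
  shows "\<Psi> k $ x = 0"
proof -
  have A: "\<forall>k<m. 0 < p k"
    and R: "\<sigma> = mat n n (\<lambda>(i,j). \<Sum>k<m. of_real (p k) * (\<Psi> k $ i) * cnj (\<Psi> k $ j))"
    using PD unfolding pure_decomp_def by auto
  have "of_real (\<Sum>k<m. p k * (cmod (\<Psi> k $ x))^2) = (\<Sum>k<m. of_real (p k) * (\<Psi> k $ x) * cnj (\<Psi> k $ x))"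
    unfolding of_real_sum by (rule sum.cong) (simp_all only: of_real_mult complex_norm_square mult.assoc)
  also have "\<dots> = 0" using zero x by (subst (asm) R) simp
  finally have "(\<Sum>k<m. p k * (cmod (\<Psi> k $ x))^2) = 0" by (simp only: of_real_eq_0_iff)
  moreover have "\<forall>k\<in>{..<m}. 0 \<le> p k * (cmod (\<Psi> k $ x))^2" using A by (simp add: less_imp_le)
  ultimately have "p k * (cmod (\<Psi> k $ x))^2 = 0"
    using sum_nonneg_eq_0_iff[of "{..<m}" "\<lambda>k. p k * (cmod (\<Psi> k $ x))^2"] k by simp
  thus ?thesis using A k by auto
qed

lemma pure_decomp_uncopy:
  assumes d: "0 < d" and C: "\<rho> \<in> carrier_mat d d"
    and PD: "pure_decomp (d*d) (cd_output d \<rho>) m p \<Psi>"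
    and \<phi>_def: "\<phi> = (\<lambda>k. vec d (\<lambda>i. \<Psi> k $ (i*d+i)))"
  shows "\<forall>k<m. \<Psi> k = copy_vec d (\<phi> k)" "pure_decomp d \<rho> m p \<phi>"
proof -
  have m: "0 < m" and A: "\<forall>k<m. 0 < p k \<and> \<Psi> k \<in> carrier_vec (d*d) \<and> cinner (d*d) (\<Psi> k) (\<Psi> k) = 1"
    and R: "cd_output d \<rho> = mat (d*d) (d*d) (\<lambda>(i,j). \<Sum>k<m. of_real (p k) * (\<Psi> k $ i) * cnj (\<Psi> k $ j))"
    using PD unfolding pure_decomp_def by auto
  show copies: "\<forall>k<m. \<Psi> k = copy_vec d (\<phi> k)"
  proof (intro allI impI)
    fix k assume k: "k < m"
    show "\<Psi> k = copy_vec d (\<phi> k)"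
    proof (rule eq_vecI)
      show "dim_vec (\<Psi> k) = dim_vec (copy_vec d (\<phi> k))" using A k by (simp add: copy_vec_def)
      fix x assume "x < dim_vec (copy_vec d (\<phi> k))"
      hence x: "x < d*d" by (simp add: copy_vec_def)
      show "\<Psi> k $ x = copy_vec d (\<phi> k) $ x"
      proof (cases "x div d = x mod d")
        case True
        hence "x = (x div d)*d + x div d" by (metis div_mult_mod_eq)
        thus ?thesis using True copy_vec_entry[OF x] pair_index_fst_lt[OF x] unfolding \<phi>_def by simp
      next
        case False
        hence "cd_output d \<rho> $$ (x,x) = 0" using cd_output_entry[OF d x x] by simp
        thus ?thesis using pure_decomp_support[OF PD x _ k] False copy_vec_entry[OF x] by simp
      qed
    qed
  qed
  have "\<rho> = mat d d (\<lambda>(i,j). \<Sum>k<m. of_real (p k) * (\<phi> k $ i) * cnj (\<phi> k $ j))"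
  proof (rule eq_matI)
    fix i j assume "i < dim_row (mat d d (\<lambda>(i,j). \<Sum>k<m. of_real (p k) * (\<phi> k $ i) * cnj (\<phi> k $ j)))"
      "j < dim_col (mat d d (\<lambda>(i,j). \<Sum>k<m. of_real (p k) * (\<phi> k $ i) * cnj (\<phi> k $ j)))"
    hence ij: "i < d" "j < d" by auto
    have ii: "i*d+i < d*d" "j*d+j < d*d" using pair_index_lt ij by auto
    have "\<rho> $$ (i,j) = cd_output d \<rho> $$ (i*d+i, j*d+j)"
      using cd_output_entry[OF d ii] pair_index_div[of i d i] pair_index_mod[of i d i]
        pair_index_div[of j d j] pair_index_mod[of j d j] ij by simp
    also have "\<dots> = (\<Sum>k<m. of_real (p k) * (\<phi> k $ i) * cnj (\<phi> k $ j))"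
      using ii ij unfolding \<phi>_def by (subst R) (simp del: cd_output_def)
    finally show "\<rho> $$ (i,j) = mat d d (\<lambda>(i,j). \<Sum>k<m. of_real (p k) * (\<phi> k $ i) * cnj (\<phi> k $ j)) $$ (i,j)"
      using ij by simp
  qed (use C in auto)
  moreover have "cinner d (\<phi> k) (\<phi> k) = 1" if k: "k < m" for k
  proof -
    have "cinner d (\<phi> k) (\<phi> k) = cinner (d*d) (copy_vec d (\<phi> k)) (copy_vec d (\<phi> k))"
      by (rule cinner_copy_vec[symmetric])
    also have "\<dots> = cinner (d*d) (\<Psi> k) (\<Psi> k)" by (simp only: copies[rule_format, OF k, symmetric])
    also have "\<dots> = 1" using A k by simp
    finally show ?thesis .
  qed
  ultimately show "pure_decomp d \<rho> m p \<phi>"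
    unfolding pure_decomp_def using m A by (auto simp: \<phi>_def)
qed

definition has_schmidt_decomp :: "nat \<Rightarrow> complex vec \<Rightarrow> nat \<Rightarrow> bool" where
  "has_schmidt_decomp d \<Psi> r \<longleftrightarrow> (\<exists>s u v.
      (\<forall>k<r. 0 < s k \<and> u k \<in> carrier_vec d \<and> v k \<in> carrier_vec d)
      \<and> (\<forall>k<r. \<forall>l<r. cinner d (u k) (u l) = (if k = l then 1 else 0)
                    \<and> cinner d (v k) (v l) = (if k = l then 1 else 0))
      \<and> \<Psi> = vec (d*d) (\<lambda>i. \<Sum>k<r. of_real (s k) * tensor_vec d (u k) (v k) $ i))"

lemma schmidt_rank_Least: "schmidt_rank d \<Psi> = (LEAST r. has_schmidt_decomp d \<Psi> r)"
  unfolding schmidt_rank_def has_schmidt_decomp_def ..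

lemma cnj_sgn_mult_sgn: "(z::complex) \<noteq> 0 \<Longrightarrow> cnj (sgn z) * sgn z = 1"
  by (metis complex_norm_square mult.commute norm_sgn of_real_1 power_one)

lemma cmod_mult_sgn: "of_real (cmod z) * sgn z = z"
  by (cases "z = 0") (simp_all add: sgn_div_norm scaleR_conv_of_real)

text \<open>A copy \<Sum>_i \<psi>_i |i,i> is already in Schmidt form: \<Sum>_{i in supp \<psi>} |\<psi>_i| (sgn \<psi>_i |i>) (x) |i>,
  so its Schmidt rank is at most the superposition number of \<psi>.\<close>
lemma copy_vec_schmidt_decomp: "has_schmidt_decomp d (copy_vec d \<psi>) (superpos d \<psi>)"
proof -
  define I where "I = {i. i < d \<and> \<psi> $ i \<noteq> 0}"
  define n where "n = card I"
  have fin: "finite I" unfolding I_def by simp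
  obtain g where g: "bij_betw g {0..<n} I" using ex_bij_betw_nat_finite[OF fin] n_def by blast
  have gI: "g k < d" "\<psi> $ g k \<noteq> 0" if "k < n" for k
    using g that unfolding bij_betw_def I_def by auto
  have g_inj: "g k = g l \<longleftrightarrow> k = l" if "k < n" "l < n" for k l
    using g that unfolding bij_betw_def inj_on_def by auto
  define s where "s = (\<lambda>k. cmod (\<psi> $ g k))"
  define u where "u = (\<lambda>k. vec d (\<lambda>i. if i = g k then sgn (\<psi> $ g k) else 0))"
  define v where "v = (\<lambda>k. vec d (\<lambda>i. if i = g k then 1 else (0::complex)))"
  have orth: "cinner d (u k) (u l) = (if k = l then 1 else 0) \<and> cinner d (v k) (v l) = (if k = l then 1 else 0)"
    if kl: "k < n" "l < n" for k l
  proof -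
    have "cinner d (u k) (u l) = (\<Sum>i<d. if i = g k then (if k = l then 1 else 0) else 0)"
      unfolding cinner_def
      by (rule sum.cong) (use gI[OF kl(1)] g_inj[OF kl] cnj_sgn_mult_sgn in \<open>auto simp: u_def\<close>)
    moreover have "cinner d (v k) (v l) = (\<Sum>i<d. if i = g k then (if k = l then 1 else 0) else 0)"
      unfolding cinner_def
      by (rule sum.cong) (use gI[OF kl(1)] g_inj[OF kl] in \<open>auto simp: v_def\<close>)
    ultimately show ?thesis using gI[OF kl(1)] by simp
  qed
  have "copy_vec d \<psi> = vec (d*d) (\<lambda>x. \<Sum>k<n. of_real (s k) * tensor_vec d (u k) (v k) $ x)"
  proof (rule eq_vecI)
    fix x assume "x < dim_vec (vec (d*d) (\<lambda>x. \<Sum>k<n. of_real (s k) * tensor_vec d (u k) (v k) $ x))"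
    hence x: "x < d*d" by simp
    define a where "a = x div d"
    define b where "b = x mod d"
    have ab: "a < d" "b < d" "x = a*d+b"
      using x pair_index_fst_lt[OF x] unfolding a_def b_def by (auto simp: mod_less_divisor)
    have "(\<Sum>k<n. of_real (s k) * tensor_vec d (u k) (v k) $ x)
        = (\<Sum>k\<in>{0..<n}. (\<lambda>i. if a = i \<and> b = i then \<psi> $ i else 0) (g k))"
      unfolding atLeast0LessThan
    proof (rule sum.cong)
      fix k assume "k \<in> {..<n}"
      hence "g k < d" "\<psi> $ g k \<noteq> 0" using gI by auto
      thus "of_real (s k) * tensor_vec d (u k) (v k) $ x = (\<lambda>i. if a = i \<and> b = i then \<psi> $ i else 0) (g k)"
        using ab x unfolding tensor_vec_def s_def u_def v_def a_def b_def by (auto simp: cmod_mult_sgn)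
    qed simp
    also have "\<dots> = (\<Sum>i\<in>I. if a = i \<and> b = i then \<psi> $ i else 0)"
      by (rule sum.reindex_bij_betw[OF g])
    also have "\<dots> = (if a = b then \<psi> $ a else 0)"
    proof (cases "a = b")
      case True
      have "(\<Sum>i\<in>I. if a = i \<and> b = i then \<psi> $ i else 0) = (\<Sum>i\<in>I. if a = i then \<psi> $ i else 0)"
        using True by (intro sum.cong) auto
      also have "\<dots> = \<psi> $ a" using fin ab unfolding I_def by auto
      finally show ?thesis using True by simp
    qed (auto intro!: sum.neutral)
    also have "\<dots> = copy_vec d \<psi> $ x" using copy_vec_pair[OF ab(1,2)] ab(3) by simp
    finally show "copy_vec d \<psi> $ x = vec (d*d) (\<lambda>x. \<Sum>k<n. of_real (s k) * tensor_vec d (u k) (v k) $ x) $ x"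
      using x by simp
  qed (simp add: copy_vec_def)
  moreover have "\<forall>k<n. 0 < s k \<and> u k \<in> carrier_vec d \<and> v k \<in> carrier_vec d"
    using gI unfolding s_def u_def v_def by auto
  ultimately have "has_schmidt_decomp d (copy_vec d \<psi>) n"
    unfolding has_schmidt_decomp_def using orth by blast
  thus ?thesis unfolding n_def I_def superpos_def .
qed

text \<open>If \<Sum>_k s_k u_k (x) v_k (u orthonormal) has coefficient matrix diag(\<psi>), then every
  index i in the support of \<psi> carries total weight \<Sum>_k |u_k(i)|^2 = 1.  Pairing the
  i-th column with u_l gives conj(u_l(i)) \<psi>_i = s_l v_l(i), and substituting this into the
  (i,i) entry yields \<psi>_i = (\<Sum>_k |u_k(i)|^2) \<psi>_i.\<close>
lemma diagonal_schmidt_weight: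
  fixes r :: nat
  assumes orth: "\<forall>k<r. \<forall>l<r. cinner d (u k) (u l) = (if k = l then 1 else 0)"
    and coeff: "\<And>i j. i < d \<Longrightarrow> j < d \<Longrightarrow>
        (if i = j then \<psi> $ i else 0) = (\<Sum>k<r. of_real (s k) * u k $ i * v k $ j)"
    and i: "i < d" "\<psi> $ i \<noteq> 0"
  shows "(\<Sum>k<r. (cmod (u k $ i))^2) = 1"
proof -
  have pairing: "cnj (u l $ i) * \<psi> $ i = of_real (s l) * v l $ i" if l: "l < r" for l
  proof -
    have "cnj (u l $ i) * \<psi> $ i = (\<Sum>m<d. cnj (u l $ m) * (if m = i then \<psi> $ m else 0))"
      using i by (simp add: if_distrib cong: if_cong)
    also have "\<dots> = (\<Sum>m<d. cnj (u l $ m) * (\<Sum>k<r. of_real (s k) * u k $ m * v k $ i))"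
      using coeff i by (intro sum.cong refl) auto
    also have "\<dots> = (\<Sum>k<r. of_real (s k) * v k $ i * cinner d (u l) (u k))"
      unfolding cinner_def sum_distrib_left
      by (subst sum.swap) (intro sum.cong refl, simp add: algebra_simps)
    also have "\<dots> = (\<Sum>k<r. if k = l then of_real (s k) * v k $ i else 0)"
      using orth l by (intro sum.cong refl) auto
    also have "\<dots> = of_real (s l) * v l $ i" using l by simp
    finally show ?thesis .
  qed
  have "\<psi> $ i = (\<Sum>k<r. u k $ i * (of_real (s k) * v k $ i))"
    using coeff[OF i(1) i(1)] by (simp add: algebra_simps)
  also have "\<dots> = (\<Sum>k<r. u k $ i * cnj (u k $ i)) * \<psi> $ i"
    unfolding sum_distrib_right by (rule sum.cong) (simp_all add: pairing[symmetric] algebra_simps)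
  also have "(\<Sum>k<r. u k $ i * cnj (u k $ i)) = of_real (\<Sum>k<r. (cmod (u k $ i))^2)"
    unfolding of_real_sum by (rule sum.cong) (simp_all only: complex_norm_square)
  finally have "\<psi> $ i * 1 = \<psi> $ i * of_real (\<Sum>k<r. (cmod (u k $ i))^2)" by (simp add: mult.commute)
  hence "of_real (\<Sum>k<r. (cmod (u k $ i))^2) = (1::complex)" using i(2) by (metis mult_left_cancel)
  thus ?thesis by (metis of_real_eq_1_iff)
qed

text \<open>Conversely the Schmidt rank of a copy is at least the superposition number: the
  support weights (each 1 by diagonal_schmidt_weight) sum to at most \<Sum>_k ||u_k||^2 = r.\<close>
lemma copy_vec_schmidt_lower:
  assumes "has_schmidt_decomp d (copy_vec d \<psi>) r"
  shows "superpos d \<psi> \<le> r"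
proof -
  obtain s u v where
    orth: "\<forall>k<r. \<forall>l<r. cinner d (u k) (u l) = (if k = l then 1 else 0)" and
    \<Psi>: "copy_vec d \<psi> = vec (d*d) (\<lambda>i. \<Sum>k<r. of_real (s k) * tensor_vec d (u k) (v k) $ i)"
    using assms unfolding has_schmidt_decomp_def by blast
  have coeff: "(if i = j then \<psi> $ i else 0) = (\<Sum>k<r. of_real (s k) * u k $ i * v k $ j)"
    if ij: "i < d" "j < d" for i j
  proof -
    have "(if i = j then \<psi> $ i else 0) = copy_vec d \<psi> $ (i*d+j)" using copy_vec_pair[OF ij] by simp
    also have "\<dots> = (\<Sum>k<r. of_real (s k) * tensor_vec d (u k) (v k) $ (i*d+j))"
      by (subst \<Psi>) (simp add: pair_index_lt[OF ij])
    also have "\<dots> = (\<Sum>k<r. of_real (s k) * u k $ i * v k $ j)"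
      unfolding tensor_vec_def using pair_index_lt[OF ij] pair_index_div[of j d i] pair_index_mod[of j d i] ij
      by (simp add: mult.assoc)
    finally show ?thesis .
  qed
  define I where "I = {i. i < d \<and> \<psi> $ i \<noteq> 0}"
  have "real (superpos d \<psi>) = (\<Sum>i\<in>I. \<Sum>k<r. (cmod (u k $ i))^2)"
    unfolding superpos_def I_def[symmetric] using diagonal_schmidt_weight[OF orth coeff] by (simp add: I_def)
  also have "\<dots> \<le> (\<Sum>i<d. \<Sum>k<r. (cmod (u k $ i))^2)"
    by (rule sum_mono2) (auto simp: I_def intro!: sum_nonneg)
  also have "\<dots> = (\<Sum>k<r. \<Sum>i<d. (cmod (u k $ i))^2)" by (rule sum.swap)
  also have "\<dots> = (\<Sum>k<r. 1)"
  proof (rule sum.cong)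
    fix k assume k: "k \<in> {..<r}"
    have "of_real (\<Sum>i<d. (cmod (u k $ i))^2) = cinner d (u k) (u k)"
      unfolding cinner_def of_real_sum by (rule sum.cong) (simp_all only: complex_norm_square mult.commute)
    also have "\<dots> = 1" using orth k by auto
    finally show "(\<Sum>i<d. (cmod (u k $ i))^2) = 1" by (metis of_real_eq_1_iff)
  qed simp
  finally show ?thesis by simp
qed

lemma schmidt_rank_copy_vec: "schmidt_rank d (copy_vec d \<psi>) = superpos d \<psi>"
  unfolding schmidt_rank_Least
  by (rule Least_equality[of "has_schmidt_decomp d (copy_vec d \<psi>)",
        OF copy_vec_schmidt_decomp copy_vec_schmidt_lower])

lemma cd_output_decomp_values:
  assumes d: "0 < d" and C: "\<rho> \<in> carrier_mat d d"
  shows "{Max ((\<lambda>k. schmidt_rank d (\<Psi> k)) ` {..<m}) | m p \<Psi>. pure_decomp (d*d) (cd_output d \<rho>) m p \<Psi>}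
       = {Max ((\<lambda>k. superpos d (\<psi> k)) ` {..<m}) | m p \<psi>. pure_decomp d \<rho> m p \<psi>}"
proof (intro equalityI subsetI)
  fix x assume "x \<in> {Max ((\<lambda>k. schmidt_rank d (\<Psi> k)) ` {..<m}) | m p \<Psi>. pure_decomp (d*d) (cd_output d \<rho>) m p \<Psi>}"
  then obtain m p \<Psi> where x: "x = Max ((\<lambda>k. schmidt_rank d (\<Psi> k)) ` {..<m})"
    and PD: "pure_decomp (d*d) (cd_output d \<rho>) m p \<Psi>" by blast
  define \<phi> where "\<phi> = (\<lambda>k. vec d (\<lambda>i. \<Psi> k $ (i*d+i)))"
  note uncopy = pure_decomp_uncopy[OF d C PD \<phi>_def]
  have "(\<lambda>k. schmidt_rank d (\<Psi> k)) ` {..<m} = (\<lambda>k. superpos d (\<phi> k)) ` {..<m}"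
    using uncopy(1) schmidt_rank_copy_vec by (intro image_cong) auto
  hence "x = Max ((\<lambda>k. superpos d (\<phi> k)) ` {..<m})" using x by simp
  thus "x \<in> {Max ((\<lambda>k. superpos d (\<psi> k)) ` {..<m}) | m p \<psi>. pure_decomp d \<rho> m p \<psi>}"
    using uncopy(2) by blast
next
  fix x assume "x \<in> {Max ((\<lambda>k. superpos d (\<psi> k)) ` {..<m}) | m p \<psi>. pure_decomp d \<rho> m p \<psi>}"
  then obtain m p \<psi> where x: "x = Max ((\<lambda>k. superpos d (\<psi> k)) ` {..<m})"
    and PD: "pure_decomp d \<rho> m p \<psi>" by blast
  have "x = Max ((\<lambda>k. schmidt_rank d (copy_vec d (\<psi> k))) ` {..<m})"
    unfolding x schmidt_rank_copy_vec ..
  thus "x \<in> {Max ((\<lambda>k. schmidt_rank d (\<Psi> k)) ` {..<m}) | m p \<Psi>. pure_decomp (d*d) (cd_output d \<rho>) m p \<Psi>}"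
    unfolding mem_Collect_eq using pure_decomp_copy[OF d PD]
    by (intro exI[of _ m] exI[of _ p] exI[of _ "\<lambda>k. copy_vec d (\<psi> k)"]) simp
qed

lemma S_N_cd_output:
  assumes "0 < d" "\<rho> \<in> carrier_mat d d"
  shows "S_N d (cd_output d \<rho>) = N_S d \<rho>"
  unfolding S_N_def N_S_def cd_output_decomp_values[OF assms] ..

lemma N_S_attained:
  assumes "density d \<rho>"
  obtains m p \<psi> where "pure_decomp d \<rho> m p \<psi>" "N_S d \<rho> = Max ((\<lambda>k. superpos d (\<psi> k)) ` {..<m})"
proof -
  have "{Max ((\<lambda>k. superpos d (\<psi> k)) ` {..<m}) | m p \<psi>. pure_decomp d \<rho> m p \<psi>} \<noteq> {}"
    using density_has_pure_decomp[OF assms] by blast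
  hence "N_S d \<rho> \<in> {Max ((\<lambda>k. superpos d (\<psi> k)) ` {..<m}) | m p \<psi>. pure_decomp d \<rho> m p \<psi>}"
    unfolding N_S_def by (rule Inf_nat_def1)
  thus ?thesis using that by blast
qed

lemma superpos_ge_1:
  assumes "cinner d \<psi> \<psi> = 1"
  shows "1 \<le> superpos d \<psi>"
proof -
  have "\<exists>i<d. \<psi> $ i \<noteq> 0"
  proof (rule ccontr)
    assume "\<not> ?thesis"
    hence "cinner d \<psi> \<psi> = 0" unfolding cinner_def by simp
    thus False using assms by simp
  qed
  hence "{i. i < d \<and> \<psi> $ i \<noteq> 0} \<noteq> {}" by blast
  thus ?thesis unfolding superpos_def by (simp add: Suc_leI card_gt_0_iff)
qed

lemma N_S_ge_1:
  assumes "density d \<rho>"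
  shows "1 \<le> N_S d \<rho>"
proof -
  obtain m p \<psi> where PD: "pure_decomp d \<rho> m p \<psi>"
    and N: "N_S d \<rho> = Max ((\<lambda>k. superpos d (\<psi> k)) ` {..<m})"
    using N_S_attained[OF assms] .
  have m: "0 < m" and "cinner d (\<psi> 0) (\<psi> 0) = 1" using PD unfolding pure_decomp_def by auto
  hence "1 \<le> superpos d (\<psi> 0)" using superpos_ge_1 by blast
  also have "\<dots> \<le> N_S d \<rho>" unfolding N using m by (intro Max_ge) auto
  finally show ?thesis .
qed

lemma classical_decomp_diagonal:
  assumes PD: "pure_decomp d \<rho> m p \<psi>" and sp: "\<And>k. k < m \<Longrightarrow> superpos d (\<psi> k) \<le> 1"
    and ij: "i < d" "j < d" "i \<noteq> j"
  shows "\<rho> $$ (i,j) = 0"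
proof -
  have "\<psi> k $ i * cnj (\<psi> k $ j) = 0" if k: "k < m" for k
  proof (rule ccontr)
    assume "\<psi> k $ i * cnj (\<psi> k $ j) \<noteq> 0"
    hence "{i, j} \<subseteq> {l. l < d \<and> \<psi> k $ l \<noteq> 0}" using ij by auto
    hence "card {i, j} \<le> superpos d (\<psi> k)" unfolding superpos_def by (intro card_mono) auto
    thus False using sp[OF k] ij(3) by simp
  qed
  hence "(\<Sum>k<m. of_real (p k) * (\<psi> k $ i) * cnj (\<psi> k $ j)) = 0"
    by (intro sum.neutral) (simp add: mult.assoc)
  moreover have "\<rho> = mat d d (\<lambda>(i,j). \<Sum>k<m. of_real (p k) * (\<psi> k $ i) * cnj (\<psi> k $ j))"
    using PD unfolding pure_decomp_def by blast
  ultimately show ?thesis using ij by simp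
qed

text \<open>For a diagonal density matrix (a probability distribution q on the basis), the
  expectation of any observable is the q-average of its diagonal, hence at most its
  largest diagonal entry.\<close>
lemma diagonal_expectation_le_max:
  assumes den: "density d \<rho>" and diag: "\<And>i j. i < d \<Longrightarrow> j < d \<Longrightarrow> i \<noteq> j \<Longrightarrow> \<rho> $$ (i,j) = 0"
    and MC: "M \<in> carrier_mat d d"
  shows "Re (mtrace (M * \<rho>)) \<le> Max {Re (M $$ (i,i)) | i. i < d}"
proof -
  have C: "\<rho> \<in> carrier_mat d d" by (rule density_carrier[OF den])
  define q where "q = (\<lambda>i. Re (\<rho> $$ (i,i)))"
  have q_diag: "\<rho> $$ (i,i) = of_real (q i)" and q_nonneg: "0 \<le> q i" if "i < d" for i
    using psd_diag[OF density_psd_kernel[OF den] that] unfolding q_def by auto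
  have "(\<Sum>i<d. q i) = Re (mtrace \<rho>)" unfolding q_def mtrace_def Re_sum using C by simp
  hence q_sum: "(\<Sum>i<d. q i) = 1" using den unfolding density_def by simp
  define Mx where "Mx = Max {Re (M $$ (i,i)) | i. i < d}"
  have "{Re (M $$ (i,i)) | i. i < d} = (\<lambda>i. Re (M $$ (i,i))) ` {..<d}" by auto
  hence M_le: "Re (M $$ (i,i)) \<le> Mx" if "i < d" for i
    unfolding Mx_def using that by (simp add: Max_ge)
  have "mtrace (M * \<rho>) = (\<Sum>i<d. \<Sum>j<d. M $$ (i,j) * \<rho> $$ (j,i))"
    unfolding mtrace_def using MC by (intro sum.cong) (auto simp: mat_mult_entry[OF MC C])
  also have "\<dots> = (\<Sum>i<d. M $$ (i,i) * of_real (q i))"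
  proof (rule sum.cong)
    fix i assume i: "i \<in> {..<d}"
    have "(\<Sum>j<d. M $$ (i,j) * \<rho> $$ (j,i)) = (\<Sum>j<d. if j = i then M $$ (i,j) * \<rho> $$ (j,i) else 0)"
      using diag i by (intro sum.cong) auto
    thus "(\<Sum>j<d. M $$ (i,j) * \<rho> $$ (j,i)) = M $$ (i,i) * of_real (q i)" using i q_diag by simp
  qed simp
  finally have "Re (mtrace (M * \<rho>)) = (\<Sum>i<d. Re (M $$ (i,i)) * q i)" by (simp add: Re_sum)
  also have "\<dots> \<le> (\<Sum>i<d. Mx * q i)" using M_le q_nonneg by (intro sum_mono mult_right_mono) auto
  also have "\<dots> = Mx" using q_sum by (simp add: sum_distrib_left[symmetric])
  finally show ?thesis unfolding Mx_def .
qed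

lemma nonclassicality_witness:
  assumes den: "density d \<rho>" and M: "hermitian d M"
    and exceeds: "Re (mtrace (M * \<rho>)) > Max {Re (M $$ (i,i)) | i. i < d}"
  shows "N_S d \<rho> \<noteq> 1"
proof
  assume N1: "N_S d \<rho> = 1"
  obtain m p \<psi> where PD: "pure_decomp d \<rho> m p \<psi>"
    and N: "N_S d \<rho> = Max ((\<lambda>k. superpos d (\<psi> k)) ` {..<m})"
    using N_S_attained[OF den] .
  have "superpos d (\<psi> k) \<le> 1" if "k < m" for k
    using that N N1 by (metis Max_ge finite_imageI finite_lessThan image_eqI lessThan_iff)
  hence "\<rho> $$ (i,j) = 0" if "i < d" "j < d" "i \<noteq> j" for i j
    using classical_decomp_diagonal[OF PD _ that] by blast
  moreover have "M \<in> carrier_mat d d" using M unfolding hermitian_def by blast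
  ultimately have "Re (mtrace (M * \<rho>)) \<le> Max {Re (M $$ (i,i)) | i. i < d}"
    by (rule diagonal_expectation_le_max[OF den])
  thus False using exceeds by simp
qed

theorem mainTheorem10:
  fixes d :: nat and \<rho> :: "complex mat"
  assumes "density d \<rho>"
  shows "S_N d (cd_output d \<rho>) = N_S d \<rho>
    \<and> (S_N d (cd_output d \<rho>) > 1 \<longleftrightarrow> N_S d \<rho> \<noteq> 1)
    \<and> (\<forall>M. hermitian d M \<and> Re (mtrace (M * \<rho>)) > Max {Re (M $$ (i,i)) | i. i < d}
          \<longrightarrow> S_N d (cd_output d \<rho>) > 1)"
proof -
  have eq: "S_N d (cd_output d \<rho>) = N_S d \<rho>"
    using S_N_cd_output density_dim_pos density_carrier assms by blast
  have ge1: "1 \<le> N_S d \<rho>" by (rule N_S_ge_1[OF assms])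
  have witness: "S_N d (cd_output d \<rho>) > 1"
    if "hermitian d M" "Re (mtrace (M * \<rho>)) > Max {Re (M $$ (i,i)) | i. i < d}" for M
    using nonclassicality_witness[OF assms that] ge1 eq by simp
  show ?thesis using eq ge1 witness by auto
qed

end
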